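(* Let $\mathcal{P}_1,\mathcal{P}_2$ be finite posets with $p_j=|\mathcal{P}_j|$, such that $\mathcal{C}(\mathcal{P}_j)\subset\mathbb{R}^{p_j}$ has $q_j$ extremal rays for $j=1,2$, and suppose $\mathcal{C}(\mathcal{P}_2)$ is simplicial. Then $r$ is a typical ND rank in $\mathcal{C}(\mathcal{P}_1)\otimes\mathcal{C}(\mathcal{P}_2)$ if and only if $\min(p_1,p_2)\le r\le\min(q_1,q_2)$.
   Context: For a finite poset $\mathcal{Q}$, the order cone $\mathcal{C}(\mathcal{Q})$ is the set of $\mathbf{f}\in\mathbb{R}^{\mathcal{Q}}$ with $f_x\ge0$ and $f_x\le f_y$ whenever $x\preceq y$; a cone in $\mathbb{R}^p$ is simplicial if it is the conical hull of $p$ linearly independent vectors. $\mathcal{N}_{\le r}$ is the set of matrices $\sum_{i=1}^r\mathbf{a}_i\mathbf{b}_i^\intercal$ with $\mathbf{a}_i\in\mathcal{C}(\mathcal{P}_1)$, $\mathbf{b}_i\in\mathcal{C}(\mathcal{P}_2)$, and $\mathcal{N}_r=\mathcal{N}_{\le r}\setminus\mathcal{N}_{\le r-1}$. A number $r$ is a typical ND rank if $\mathcal{N}_r$ has non-empty interior in $\mathbb{R}^{p_1\times p_2}$. *)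

theory Defs
  imports "HOL-Analysis.Analysis"
begin

definition order_cone :: "('a::finite \<times> 'a) set \<Rightarrow> (real^'a) set" where
  "order_cone R = {f. (\<forall>x. 0 \<le> f $ x) \<and> (\<forall>x y. (x, y) \<in> R \<longrightarrow> f $ x \<le> f $ y)}"

definition ray :: "'v::real_vector \<Rightarrow> 'v set" where
  "ray v = {t *\<^sub>R v | t. t \<ge> 0}"

definition extremal_rays :: "'v::real_vector set \<Rightarrow> 'v set set" where
  "extremal_rays C = {R. \<exists>v. v \<noteq> 0 \<and> R = ray v \<and> R face_of C}"

definition conical_hull :: "'v::real_vector set \<Rightarrow> 'v set" where
  "conical_hull S = {(\<Sum>v\<in>S. c v *\<^sub>R v) | c. \<forall>v\<in>S. 0 \<le> c v}"

definition simplicial :: "'v::euclidean_space set \<Rightarrow> bool" where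
  "simplicial C \<longleftrightarrow> (\<exists>S. independent S \<and> finite S \<and> card S = DIM('v) \<and> C = conical_hull S)"

definition outer :: "real^'a \<Rightarrow> real^'b \<Rightarrow> real^'b^'a" where
  "outer a b = (\<chi> i j. a $ i * b $ j)"

definition ND_le :: "('a::finite \<times> 'a) set \<Rightarrow> ('b::finite \<times> 'b) set \<Rightarrow> nat \<Rightarrow> (real^'b^'a) set" where
  "ND_le R1 R2 r = {(\<Sum>i<r. outer (a i) (b i)) | a b.
      (\<forall>i<r. a i \<in> order_cone R1 \<and> b i \<in> order_cone R2)}"

definition ND_eq :: "('a::finite \<times> 'a) set \<Rightarrow> ('b::finite \<times> 'b) set \<Rightarrow> nat \<Rightarrow> (real^'b^'a) set" where
  "ND_eq R1 R2 r = (if r = 0 then ND_le R1 R2 0 else ND_le R1 R2 r - ND_le R1 R2 (r - 1))"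

definition typical_ND_rank :: "('a::finite \<times> 'a) set \<Rightarrow> ('b::finite \<times> 'b) set \<Rightarrow> nat \<Rightarrow> bool" where
  "typical_ND_rank R1 R2 r \<longleftrightarrow> interior (ND_eq R1 R2 r) \<noteq> {}"

end

(*
  The order cone C(P1) is generated by the indicator vectors of up-sets, and a conically
  independent generating set G has exactly one element on each extremal ray, so q1 = |G|;
  likewise q2 = p2.  As C(P2) is simplicial, a linear change of coordinates in the second factor
  turns it into the nonnegative orthant without changing the typical ranks, and then a matrix has
  nonnegative rank at most k iff its columns lie in the conical hull of k vectors of C(P1).

  Decomposing the columns over G, or keeping the columns themselves, every matrix has nonnegative
  rank at most min(q1, p2), so N_r is empty for larger r.  The nonnegative rank dominates the
  ordinary rank, and matrices of rank below min(p1, p2) form a set with empty interior.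
  Conversely, for r in the range, a matrix whose r nonzero columns are distinct elements of G has
  nonnegative rank r, since each column forces one of the left factors onto its extremal ray.  It
  lies in the closure of the open set of matrices whose columns are interior to the cone of a
  suitable subset of G, which is contained in N_{<=r}; since N_{<=r-1} is closed, that open set
  meets the complement of N_{<=r-1}, giving interior points of N_r.
*)
theory Submission
  imports Defs
begin

section \<open>Finitely generated convex cones and their extremal rays\<close>

definition pointed :: "'v::real_vector set \<Rightarrow> bool" where
  "pointed C \<longleftrightarrow> (\<forall>x\<in>C. - x \<in> C \<longrightarrow> x = 0)"

definition conic_independent :: "'v::real_vector set \<Rightarrow> bool" where
  "conic_independent G \<longleftrightarrow> (\<forall>g\<in>G. g \<notin> convex_cone hull (G - {g}))"

lemma convex_cone_sum:
  assumes "convex_cone C" and "\<And>i. i \<in> I \<Longrightarrow> f i \<in> C"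
  shows "(\<Sum>i\<in>I. f i) \<in> C"
  using assms(2)
  by (induction I rule: infinite_finite_induct)
     (auto intro: convex_cone_add convex_cone_contains_0 assms(1))

lemma conical_hull_eq_convex_cone_hull:
  assumes "finite S"
  shows "conical_hull S = convex_cone hull S"
proof
  show "conical_hull S \<subseteq> convex_cone hull S"
    unfolding conical_hull_def
    by (force intro: convex_cone_sum[OF convex_cone_convex_cone_hull] convex_cone_hull_mul hull_inc)
  have "convex_cone (conical_hull S)"
    unfolding convex_cone_iff
  proof (intro conjI ballI allI impI)
    show "0 \<in> conical_hull S"
      unfolding conical_hull_def by (auto intro!: exI[of _ "\<lambda>_. 0"])
  next
    fix x y assume "x \<in> conical_hull S" "y \<in> conical_hull S"
    then obtain c d where "\<forall>v\<in>S. 0 \<le> c v" "x = (\<Sum>v\<in>S. c v *\<^sub>R v)"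
      and "\<forall>v\<in>S. 0 \<le> d v" "y = (\<Sum>v\<in>S. d v *\<^sub>R v)"
      unfolding conical_hull_def by blast
    then show "x + y \<in> conical_hull S"
      unfolding conical_hull_def
      by (auto intro!: exI[of _ "\<lambda>v. c v + d v"] simp: scaleR_add_left sum.distrib)
  next
    fix x and t :: real assume "x \<in> conical_hull S" "0 \<le> t"
    then obtain c where "\<forall>v\<in>S. 0 \<le> c v" "x = (\<Sum>v\<in>S. c v *\<^sub>R v)"
      unfolding conical_hull_def by blast
    with \<open>0 \<le> t\<close> show "t *\<^sub>R x \<in> conical_hull S"
      unfolding conical_hull_def by (auto intro!: exI[of _ "\<lambda>v. t * c v"] simp: scaleR_sum_right)
  qed
  moreover have "S \<subseteq> conical_hull S"
  proof
    fix v assume "v \<in> S"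
    then have "v = (\<Sum>w\<in>S. (if w = v then 1 else 0) *\<^sub>R w)"
      using assms by (simp add: if_distrib[of "\<lambda>c. c *\<^sub>R _"] cong: if_cong)
    then show "v \<in> conical_hull S"
      unfolding conical_hull_def by fastforce
  qed
  ultimately show "convex_cone hull S \<subseteq> conical_hull S"
    by (rule hull_minimal[rotated])
qed

lemma convex_cone_hull_finiteE:
  assumes "finite S" and "x \<in> convex_cone hull S"
  obtains c where "\<And>v. v \<in> S \<Longrightarrow> 0 \<le> c v" and "x = (\<Sum>v\<in>S. c v *\<^sub>R v)"
  using assms by (auto simp flip: conical_hull_eq_convex_cone_hull simp: conical_hull_def)

lemma convex_cone_hull_subset_span: "convex_cone hull S \<subseteq> span S"
  by (simp add: hull_minimal span_superset convex_cone_span)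

lemma conic_independent_if_independent: "independent S \<Longrightarrow> conic_independent S"
  unfolding conic_independent_def dependent_def using convex_cone_hull_subset_span by blast

lemma pointed_sum_eq_0:
  assumes "convex_cone C" "pointed C" "finite I" "\<And>i. i \<in> I \<Longrightarrow> x i \<in> C"
    and "(\<Sum>i\<in>I. x i) = 0" and "i \<in> I"
  shows "x i = 0"
proof -
  have "- x i = (\<Sum>j\<in>I - {i}. x j)"
    using assms(5) sum.remove[OF assms(3,6), of x] by (simp add: add_eq_0_iff2)
  then have "- x i \<in> C"
    using assms(1,4) by (auto intro: convex_cone_sum)
  then show ?thesis
    using assms(2,4,6) unfolding pointed_def by blast
qed

lemma mem_ray_iff: "x \<in> ray v \<longleftrightarrow> (\<exists>t\<ge>0. x = t *\<^sub>R v)"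
  by (auto simp: ray_def)

lemma ray_scaleR: "x \<in> ray v \<Longrightarrow> 0 \<le> c \<Longrightarrow> c *\<^sub>R x \<in> ray v"
  unfolding mem_ray_iff by (metis scaleR_scaleR zero_le_mult_iff)

lemma ray_self: "v \<in> ray v"
  by (auto simp: mem_ray_iff intro!: exI[of _ 1])

lemma convex_ray: "convex (ray v)"
proof -
  have "ray v = (\<lambda>t. t *\<^sub>R v) ` {0..}"
    by (auto simp: ray_def)
  then show ?thesis
    by (simp add: convex_linear_image)
qed

lemma ray_subset_convex_cone: "convex_cone C \<Longrightarrow> v \<in> C \<Longrightarrow> ray v \<subseteq> C"
  by (auto simp: mem_ray_iff intro: convex_cone_scaleR)

lemma ray_subset_of_mem: "x \<in> ray v \<Longrightarrow> ray x \<subseteq> ray v"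
  using ray_scaleR by (auto simp: ray_def)

lemma ray_eq_of_mem:
  assumes "x \<in> ray v" and "x \<noteq> 0"
  shows "ray x = ray v"
proof -
  obtain t where "t \<ge> 0" "x = t *\<^sub>R v"
    using assms(1) by (auto simp: mem_ray_iff)
  with assms(2) have "v \<in> ray x"
    by (auto simp: mem_ray_iff intro!: exI[of _ "1 / t"])
  then show ?thesis
    using assms(1) ray_subset_of_mem by blast
qed

lemma ray_face_of_addD:
  assumes face: "ray v face_of C" and C: "convex_cone C"
    and "x \<in> C" "y \<in> C" and xy: "x + y \<in> ray v"
  shows "x \<in> ray v"
proof (cases "x = y")
  case True
  then show ?thesis
    using ray_scaleR[OF xy, of "1/2"] by (simp flip: scaleR_2)
next
  case False
  have "x + y \<in> open_segment (2 *\<^sub>R x) (2 *\<^sub>R y)"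
    using False midpoint_in_open_segment[of "2 *\<^sub>R x" "2 *\<^sub>R y"]
    by (simp add: midpoint_def scaleR_add_right[symmetric])
  then have "2 *\<^sub>R x \<in> ray v"
    using face xy \<open>x \<in> C\<close> \<open>y \<in> C\<close> C unfolding face_of_def
    by (meson convex_cone_scaleR zero_le_numeral)
  then show ?thesis
    using ray_scaleR[of "2 *\<^sub>R x" v "1/2"] by simp
qed

lemma ray_face_ofI:
  assumes C: "convex_cone C" and "v \<in> C"
    and split: "\<And>x y. x \<in> C \<Longrightarrow> y \<in> C \<Longrightarrow> x + y \<in> ray v \<Longrightarrow> x \<in> ray v"
  shows "ray v face_of C"
proof -
  have endpoint: "a \<in> ray v"
    if "a \<in> C" "b \<in> C" "(1 - u) *\<^sub>R a + u *\<^sub>R b \<in> ray v" "0 < u" "u < 1" for a b u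
  proof -
    have "(1 - u) *\<^sub>R a \<in> ray v"
      using split that C by (meson convex_cone_scaleR less_imp_le diff_ge_0_iff_ge)
    then show ?thesis
      using ray_scaleR[of "(1 - u) *\<^sub>R a" v "1 / (1 - u)"] \<open>u < 1\<close> by simp
  qed
  show ?thesis
    unfolding face_of_def
  proof (intro conjI ballI impI)
    fix a b x assume "a \<in> C" "b \<in> C" "x \<in> ray v" "x \<in> open_segment a b"
    then obtain u where u: "0 < u" "u < 1" and x: "x = (1 - u) *\<^sub>R a + u *\<^sub>R b"
      by (auto simp: in_segment)
    show "a \<in> ray v"
      using endpoint[of a b u] \<open>a \<in> C\<close> \<open>b \<in> C\<close> \<open>x \<in> ray v\<close> u x by blast
    show "b \<in> ray v"
      using endpoint[of b a "1 - u"] \<open>a \<in> C\<close> \<open>b \<in> C\<close> \<open>x \<in> ray v\<close> u x by (simp add: add.commute)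
  qed (use ray_subset_convex_cone[OF C \<open>v \<in> C\<close>] convex_ray in auto)
qed

lemma ray_face_of_sum_memD:
  assumes "ray v face_of C" and "convex_cone C" and "finite I" and "\<And>i. i \<in> I \<Longrightarrow> x i \<in> C"
    and "(\<Sum>i\<in>I. x i) \<in> ray v" and "i \<in> I"
  shows "x i \<in> ray v"
proof (rule ray_face_of_addD[OF assms(1,2)])
  show "x i \<in> C" "(\<Sum>j\<in>I - {i}. x j) \<in> C"
    using assms(2,4,6) by (auto intro: convex_cone_sum)
  show "x i + (\<Sum>j\<in>I - {i}. x j) \<in> ray v"
    using assms(5) sum.remove[OF assms(3,6), of x] by simp
qed

lemma ray_scaleR_eq: "0 \<le> c \<Longrightarrow> c *\<^sub>R x \<noteq> 0 \<Longrightarrow> ray (c *\<^sub>R x) = ray x"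
  by (rule ray_eq_of_mem) (auto simp: mem_ray_iff)

lemma ray_face_of_sum_summand:
  assumes "ray v face_of C" and "convex_cone C" and "finite I" and "\<And>i. i \<in> I \<Longrightarrow> x i \<in> C"
    and v: "v = (\<Sum>i\<in>I. x i)" and "v \<noteq> 0"
  shows "\<exists>i\<in>I. x i \<noteq> 0 \<and> ray (x i) = ray v"
proof -
  have "\<exists>i\<in>I. x i \<noteq> 0"
  proof (rule ccontr)
    assume "\<not> ?thesis"
    then have "v = 0"
      using v by (auto intro!: sum.neutral)
    with \<open>v \<noteq> 0\<close> show False ..
  qed
  then obtain i where i: "i \<in> I" "x i \<noteq> 0"
    by blast
  moreover have "x i \<in> ray v"
    using ray_face_of_sum_memD[OF assms(1-4) _ i(1)] v ray_self[of v] by simp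
  ultimately show ?thesis
    using ray_eq_of_mem by blast
qed

context
  fixes G :: "'v::real_vector set"
  assumes finite_G: "finite G" and independent_G: "conic_independent G"
    and pointed_G: "pointed (convex_cone hull G)"
begin

lemma conic_independent_nonzero: "g \<in> G \<Longrightarrow> g \<noteq> 0"
  using independent_G convex_cone_hull_contains_0 unfolding conic_independent_def by metis

lemma conic_combination_on_generator_ray:
  assumes g: "g \<in> G" and comb: "t *\<^sub>R g = (\<Sum>h\<in>G. \<nu> h *\<^sub>R h)"
    and nonneg: "\<And>h. h \<in> G \<Longrightarrow> 0 \<le> \<nu> h" and h: "h \<in> G" "h \<noteq> g"
  shows "\<nu> h = 0"
proof -
  define w where "w = (\<Sum>k\<in>G - {g}. \<nu> k *\<^sub>R k)"
  have w_hull: "w \<in> convex_cone hull (G - {g})"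
    unfolding w_def using nonneg
    by (intro convex_cone_sum[OF convex_cone_convex_cone_hull] convex_cone_hull_mul hull_inc) auto
  have "t *\<^sub>R g = \<nu> g *\<^sub>R g + w"
    using comb sum.remove[OF finite_G g, of "\<lambda>k. \<nu> k *\<^sub>R k"] by (simp add: w_def)
  then have w_eq: "w = (t - \<nu> g) *\<^sub>R g"
    by (metis add_diff_cancel_left' scaleR_diff_left)
  show ?thesis
  proof (cases "\<nu> g < t")
    case True
    then have "g = (1 / (t - \<nu> g)) *\<^sub>R w"
      by (simp add: w_eq)
    also have "\<dots> \<in> convex_cone hull (G - {g})"
      using True w_hull by (simp add: convex_cone_hull_mul)
    finally show ?thesis
      using independent_G g unfolding conic_independent_def by blast
  next
    case False
    have "w \<in> convex_cone hull G"
      using w_hull hull_mono[of "G - {g}" G] by blast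
    moreover have "- w \<in> convex_cone hull G"
      using False g w_eq by (simp add: convex_cone_hull_mul hull_inc flip: scaleR_minus_left)
    ultimately have "w = 0"
      using pointed_G unfolding pointed_def by blast
    then have "\<nu> h *\<^sub>R h = 0"
      using pointed_sum_eq_0[OF convex_cone_convex_cone_hull pointed_G, of "G - {g}" "\<lambda>k. \<nu> k *\<^sub>R k" h]
        finite_G nonneg h
      by (auto simp: w_def intro: convex_cone_hull_mul hull_inc)
    then show ?thesis
      using conic_independent_nonzero h by simp
  qed
qed

lemma ray_face_of_convex_cone_hull:
  assumes g: "g \<in> G"
  shows "ray g face_of convex_cone hull G"
proof (rule ray_face_ofI[OF convex_cone_convex_cone_hull hull_inc[OF g]])
  fix x y assume x: "x \<in> convex_cone hull G" and y: "y \<in> convex_cone hull G" and "x + y \<in> ray g"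
  obtain \<alpha> where \<alpha>: "\<And>h. h \<in> G \<Longrightarrow> 0 \<le> \<alpha> h" "x = (\<Sum>h\<in>G. \<alpha> h *\<^sub>R h)"
    using convex_cone_hull_finiteE[OF finite_G x] by blast
  obtain \<beta> where \<beta>: "\<And>h. h \<in> G \<Longrightarrow> 0 \<le> \<beta> h" "y = (\<Sum>h\<in>G. \<beta> h *\<^sub>R h)"
    using convex_cone_hull_finiteE[OF finite_G y] by blast
  obtain t where "x + y = t *\<^sub>R g"
    using \<open>x + y \<in> ray g\<close> by (auto simp: mem_ray_iff)
  with \<alpha> \<beta> have "t *\<^sub>R g = (\<Sum>h\<in>G. (\<alpha> h + \<beta> h) *\<^sub>R h)"
    by (simp add: scaleR_add_left sum.distrib)
  then have "\<alpha> h + \<beta> h = 0" if "h \<in> G - {g}" for h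
    using that \<alpha>(1) \<beta>(1) conic_combination_on_generator_ray[OF g, of t "\<lambda>h. \<alpha> h + \<beta> h" h]
    by auto
  then have "\<alpha> h = 0" if "h \<in> G - {g}" for h
    using that \<alpha>(1) \<beta>(1) by (metis DiffD1 add_nonneg_eq_0_iff)
  then have "x = \<alpha> g *\<^sub>R g"
    using \<alpha>(2) sum.remove[OF finite_G g, of "\<lambda>h. \<alpha> h *\<^sub>R h"] by simp
  then show "x \<in> ray g"
    using \<alpha>(1)[OF g] by (auto simp: mem_ray_iff)
qed

lemma inj_on_ray: "inj_on ray G"
proof (rule inj_onI, rule ccontr)
  fix g h assume g: "g \<in> G" and h: "h \<in> G" and "ray g = ray h" and "g \<noteq> h"
  then have "h \<in> ray g"
    using ray_self[of h] by simp
  then obtain t where "h = t *\<^sub>R g"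
    by (auto simp: mem_ray_iff)
  then have "t *\<^sub>R g = (\<Sum>k\<in>G. (if k = h then 1 else 0) *\<^sub>R k)"
    using finite_G h by (simp add: if_distrib[of "\<lambda>c. c *\<^sub>R _"] cong: if_cong)
  moreover have "\<And>k. k \<in> G \<Longrightarrow> 0 \<le> (if k = h then 1 else (0::real))"
    by simp
  ultimately have "(if h = h then 1 else (0::real)) = 0"
    using \<open>g \<noteq> h\<close> by (intro conic_combination_on_generator_ray[OF g _ _ h]) auto
  then show False
    by simp
qed

lemma extremal_rays_convex_cone_hull: "extremal_rays (convex_cone hull G) = ray ` G"
proof (intro set_eqI iffI)
  fix R assume "R \<in> ray ` G"
  then show "R \<in> extremal_rays (convex_cone hull G)"
    unfolding extremal_rays_def using conic_independent_nonzero ray_face_of_convex_cone_hull by blast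
next
  fix R assume "R \<in> extremal_rays (convex_cone hull G)"
  then obtain v where v: "v \<noteq> 0" "R = ray v" and face: "ray v face_of convex_cone hull G"
    unfolding extremal_rays_def by blast
  then have "v \<in> convex_cone hull G"
    using ray_self face_of_imp_subset by blast
  then obtain c where c: "\<And>h. h \<in> G \<Longrightarrow> 0 \<le> c h" and v_eq: "v = (\<Sum>h\<in>G. c h *\<^sub>R h)"
    using convex_cone_hull_finiteE[OF finite_G] by blast
  have "c h *\<^sub>R h \<in> convex_cone hull G" if "h \<in> G" for h
    using that c by (intro convex_cone_hull_mul hull_inc)
  then obtain h where h: "h \<in> G" "c h *\<^sub>R h \<noteq> 0" "ray (c h *\<^sub>R h) = ray v"
    using ray_face_of_sum_summand[OF face convex_cone_convex_cone_hull finite_G _ v_eq v(1)] by blast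
  then have "R = ray h"
    using ray_scaleR_eq[OF c[OF h(1)] h(2)] v(2) by simp
  with h(1) show "R \<in> ray ` G"
    by blast
qed

lemma card_extremal_rays_convex_cone_hull: "card (extremal_rays (convex_cone hull G)) = card G"
  using extremal_rays_convex_cone_hull card_image[OF inj_on_ray] by simp

end

lemma conic_independent_generating_subset:
  assumes "finite E"
  obtains G where "G \<subseteq> E" "conic_independent G" "convex_cone hull G = convex_cone hull E"
proof -
  let ?P = "\<lambda>G. G \<subseteq> E \<and> convex_cone hull G = convex_cone hull E"
  obtain G where G: "?P G" and min: "\<And>G'. ?P G' \<Longrightarrow> card G \<le> card G'"
    using ex_has_least_nat[of ?P E card] by blast
  have "finite G"
    using G assms finite_subset by blast
  have "conic_independent G"
    unfolding conic_independent_def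
  proof (intro ballI notI)
    fix g assume g: "g \<in> G" and "g \<in> convex_cone hull (G - {g})"
    then have "convex_cone hull (G - {g}) = convex_cone hull G"
      by (metis hull_redundant insert_Diff)
    then have "?P (G - {g})"
      using G by auto
    then have "card G \<le> card (G - {g})"
      by (rule min)
    then show False
      using card_Diff1_less[OF \<open>finite G\<close> g] by simp
  qed
  with G that show thesis
    by blast
qed

lemma interior_convex_cone_hull_nonempty:
  fixes E :: "'v::euclidean_space set"
  assumes "finite E" and "span E = UNIV"
  shows "interior (convex_cone hull E) \<noteq> {}"
proof -
  obtain B where B: "B \<subseteq> E" "independent B" "card B = dim E"
    by (metis basis_exists)
  then have "card B = DIM('v)"
    using assms(2) by (metis dim_UNIV dim_span)
  then obtain a where "a \<in> interior (convex hull (insert 0 B))"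
    using interior_simplex_nonempty[OF B(2)] B(1) assms(1) finite_subset by metis
  moreover have "convex hull (insert 0 B) \<subseteq> convex_cone hull E"
    using B(1)
    by (intro hull_minimal) (auto simp: convex_convex_cone_hull convex_cone_hull_contains_0 intro: hull_inc)
  ultimately show ?thesis
    using interior_mono by blast
qed

lemma spanning_subset_with_card:
  fixes G :: "'v::euclidean_space set"
  assumes "finite G" and "span G = UNIV" and "DIM('v) \<le> m" and "m \<le> card G"
  obtains E where "E \<subseteq> G" and "card E = m" and "span E = UNIV"
proof -
  obtain B where B: "B \<subseteq> G" "independent B" "G \<subseteq> span B" "card B = dim G"
    by (rule basis_exists)
  have "finite B"
    using B(1) assms(1) finite_subset by blast
  have "card B = DIM('v)"
    using B(4) assms(2) by (metis dim_UNIV dim_span)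
  have "m - card B \<le> card (G - B)"
    using card_Diff_subset[OF \<open>finite B\<close> B(1)] assms(4) by simp
  then obtain T where T: "T \<subseteq> G - B" "card T = m - card B" "finite T"
    by (rule obtain_subset_with_card_n)
  show thesis
  proof (rule that[of "B \<union> T"])
    show "B \<union> T \<subseteq> G"
      using B(1) T(1) by blast
    show "card (B \<union> T) = m"
      using T \<open>finite B\<close> \<open>card B = DIM('v)\<close> assms(3) by (subst card_Un_disjoint) auto
    show "span (B \<union> T) = UNIV"
      using B(3) assms(2) span_mono[of B "B \<union> T"] span_minimal[OF B(3) subspace_span] by auto
  qed
qed

section \<open>Order cones\<close>

lemma convex_cone_order_cone: "convex_cone (order_cone R)"
  unfolding convex_cone_iff order_cone_def by (auto intro: add_mono mult_left_mono)

lemma pointed_order_cone: "pointed (order_cone R)"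
  by (auto simp: pointed_def order_cone_def vec_eq_iff intro: antisym)

lemma closed_order_cone: "closed (order_cone R)"
  unfolding order_cone_def
  by (intro closed_Collect_conj closed_Collect_all closed_Collect_imp closed_Collect_le
      continuous_on_const continuous_on_component continuous_on_id) simp

lemma order_cone_nonneg: "f \<in> order_cone R \<Longrightarrow> 0 \<le> f $ x"
  by (simp add: order_cone_def)

definition indicator_vector :: "'a set \<Rightarrow> real^'a::finite" where
  "indicator_vector U = (\<chi> x. if x \<in> U then 1 else 0)"

lemma indicator_vector_in_order_cone:
  assumes "\<And>x y. (x, y) \<in> R \<Longrightarrow> x \<in> U \<Longrightarrow> y \<in> U"
  shows "indicator_vector U \<in> order_cone R"
  using assms by (auto simp: order_cone_def indicator_vector_def)

lemma indicator_support_in_order_cone: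
  assumes "f \<in> order_cone R"
  shows "indicator_vector {x. f $ x \<noteq> 0} \<in> order_cone R"
proof (rule indicator_vector_in_order_cone)
  fix x y assume "(x, y) \<in> R" and "x \<in> {x. f $ x \<noteq> 0}"
  moreover have "f $ x \<le> f $ y"
    using assms \<open>(x, y) \<in> R\<close> by (simp add: order_cone_def)
  ultimately show "y \<in> {x. f $ x \<noteq> 0}"
    using order_cone_nonneg[OF assms, of x] by auto
qed

lemma order_cone_diff_indicator_support:
  assumes f: "f \<in> order_cone R" and m: "\<And>x. f $ x \<noteq> 0 \<Longrightarrow> m \<le> f $ x"
  shows "f - m *\<^sub>R indicator_vector {x. f $ x \<noteq> 0} \<in> order_cone R"
proof -
  have mono: "f $ x \<le> f $ y" if "(x, y) \<in> R" for x y
    using f that by (simp add: order_cone_def)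
  have up: "f $ y \<noteq> 0" if "(x, y) \<in> R" "f $ x \<noteq> 0" for x y
    using mono[OF that(1)] that(2) order_cone_nonneg[OF f, of x] by auto
  from mono up m show ?thesis
    using order_cone_nonneg[OF f] by (auto simp: order_cone_def indicator_vector_def)
qed

(* Subtracting the least positive value times the indicator of the support, which is an up-set,
   stays in the cone and shrinks the support. *)
lemma order_cone_subset_upset_hull:
  "f \<in> order_cone R \<Longrightarrow> f \<in> convex_cone hull (order_cone R \<inter> range indicator_vector)"
proof (induction "card {x. f $ x \<noteq> 0}" arbitrary: f rule: less_induct)
  case less
  let ?H = "convex_cone hull (order_cone R \<inter> range indicator_vector)"
  let ?U = "{x. f $ x \<noteq> 0}"
  show ?case
  proof (cases "f = 0")
    case True
    then show ?thesis
      by (simp add: convex_cone_hull_contains_0)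
  next
    case False
    define m where "m = Min ((\<lambda>x. f $ x) ` ?U)"
    have "?U \<noteq> {}"
      using False by (auto simp: vec_eq_iff)
    then have "m \<in> (\<lambda>x. f $ x) ` ?U"
      unfolding m_def by (intro Min_in) auto
    then obtain x0 where x0: "f $ x0 \<noteq> 0" "f $ x0 = m"
      by blast
    have m_le: "m \<le> f $ x" if "f $ x \<noteq> 0" for x
      unfolding m_def using that by simp
    have "0 < m"
      using x0 order_cone_nonneg[OF less.prems, of x0] by simp
    define g where "g = f - m *\<^sub>R indicator_vector ?U"
    have g_cone: "g \<in> order_cone R"
      unfolding g_def using less.prems m_le by (rule order_cone_diff_indicator_support)
    have "{x. g $ x \<noteq> 0} \<subset> ?U"
      using x0 by (auto simp: g_def indicator_vector_def)
    then have "card {x. g $ x \<noteq> 0} < card ?U"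
      by (simp add: psubset_card_mono)
    then have "g \<in> ?H"
      using g_cone by (rule less.hyps)
    moreover have "indicator_vector ?U \<in> ?H"
      using indicator_support_in_order_cone[OF less.prems] by (simp add: hull_inc)
    ultimately have "g + m *\<^sub>R indicator_vector ?U \<in> ?H"
      using \<open>0 < m\<close> by (intro convex_cone_hull_add convex_cone_hull_mul) auto
    then show ?thesis
      by (simp add: g_def)
  qed
qed

lemma order_cone_conic_independent_generators:
  obtains G :: "(real^'a::finite) set"
  where "finite G" "conic_independent G" "convex_cone hull G = order_cone R"
proof -
  define E :: "(real^'a) set" where "E = order_cone R \<inter> range indicator_vector"
  have "finite E"
    unfolding E_def by simp
  moreover have "convex_cone hull E = order_cone R"
    using order_cone_subset_upset_hull[of _ R] hull_minimal[of E "order_cone R" convex_cone]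
      convex_cone_order_cone
    unfolding E_def by blast
  moreover obtain G where "G \<subseteq> E" "conic_independent G" "convex_cone hull G = convex_cone hull E"
    using conic_independent_generating_subset[OF \<open>finite E\<close>] by blast
  ultimately show thesis
    using that finite_subset by metis
qed

lemma span_order_cone:
  assumes "partial_order_on UNIV R"
  shows "span (order_cone R) = UNIV"
proof -
  have refl: "(x, x) \<in> R" and trans: "trans R" and antisym: "antisym R" for x
    using assms unfolding partial_order_on_def preorder_on_def refl_on_def by auto
  have "axis x 1 \<in> span (order_cone R)" for x
  proof -
    let ?U = "{y. (x, y) \<in> R}"
    have "indicator_vector ?U \<in> order_cone R" "indicator_vector (?U - {x}) \<in> order_cone R"
      using trans antisym by (auto intro!: indicator_vector_in_order_cone dest: transD antisymD)
    moreover have "axis x 1 = indicator_vector ?U - indicator_vector (?U - {x})"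
      using refl by (auto simp: vec_eq_iff axis_def indicator_vector_def)
    ultimately show ?thesis
      by (metis span_base span_diff)
  qed
  moreover have "v = (\<Sum>x\<in>UNIV. v $ x *\<^sub>R axis x 1)" for v :: "real^'a"
    by (simp add: vec_eq_iff axis_def if_distrib cong: if_cong)
  moreover have "(\<Sum>x\<in>UNIV. v $ x *\<^sub>R axis x 1) \<in> span (order_cone R)" for v :: "real^'a"
    using calculation by (intro span_sum span_scale)
  ultimately have "v \<in> span (order_cone R)" for v :: "real^'a"
    by metis
  then show ?thesis
    by blast
qed

lemma span_generators_order_cone:
  assumes "partial_order_on UNIV R" and "convex_cone hull G = order_cone R"
  shows "span G = UNIV"
proof -
  have "order_cone R \<subseteq> span G"
    using convex_cone_hull_subset_span[of G] assms(2) by simp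
  then have "span (order_cone R) \<subseteq> span G"
    using subspace_span by (rule span_minimal)
  then show ?thesis
    using span_order_cone[OF assms(1)] by (metis subset_UNIV subset_antisym)
qed

lemma CARD_le_card_generators_order_cone:
  fixes G :: "(real^'a::finite) set"
  assumes "partial_order_on UNIV R" and "finite G" and "convex_cone hull G = order_cone R"
  shows "CARD('a) \<le> card G"
proof -
  have "CARD('a) = dim G"
    using dim_span[of G] by (simp add: span_generators_order_cone[OF assms(1,3)])
  then show ?thesis
    using dim_le_card'[OF assms(2)] by simp
qed

lemma generators_subset_with_interior:
  fixes G :: "(real^'a::finite) set"
  assumes "partial_order_on UNIV R" and "finite G" and "convex_cone hull G = order_cone R"
    and "CARD('a) \<le> m" and "m \<le> card G"
  obtains E where "E \<subseteq> G" and "card E = m" and "interior (convex_cone hull E) \<noteq> {}"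
proof -
  obtain E where E: "E \<subseteq> G" "card E = m" "span E = UNIV"
    using spanning_subset_with_card[OF assms(2) span_generators_order_cone[OF assms(1,3)]] assms(4,5)
    by auto
  moreover have "finite E"
    using E(1) assms(2) finite_subset by blast
  ultimately show thesis
    using that interior_convex_cone_hull_nonempty by blast
qed

lemma card_extremal_rays_simplicial_order_cone:
  fixes R :: "('b::finite \<times> 'b) set"
  assumes "simplicial (order_cone R)"
  shows "card (extremal_rays (order_cone R)) = CARD('b)"
proof -
  obtain S :: "(real^'b) set" where S: "independent S" "finite S" "card S = CARD('b)"
    and hull: "convex_cone hull S = order_cone R"
    using assms unfolding simplicial_def by (auto simp: conical_hull_eq_convex_cone_hull)
  moreover have "pointed (convex_cone hull S)"
    using hull pointed_order_cone by simp
  ultimately show ?thesis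
    using card_extremal_rays_convex_cone_hull[OF S(2) conic_independent_if_independent[OF S(1)]]
    by simp
qed

lemma vector_matrix_mult_bij_rows:
  fixes \<phi> :: "'b::finite \<Rightarrow> real^'m::finite"
  assumes "bij_betw \<phi> UNIV S"
  shows "l v* (\<chi> j. \<phi> j) = (\<Sum>v\<in>S. l $ inv_into UNIV \<phi> v *\<^sub>R v)"
proof -
  have "l v* (\<chi> j. \<phi> j) = (\<Sum>j\<in>UNIV. l $ j *\<^sub>R \<phi> j)"
    by (simp add: vec_eq_iff vector_matrix_mult_def mult.commute)
  also have "\<dots> = (\<Sum>v\<in>S. l $ inv_into UNIV \<phi> v *\<^sub>R v)"
    using sum.reindex_bij_betw[OF assms, of "\<lambda>v. l $ inv_into UNIV \<phi> v *\<^sub>R v"] assms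
    by (simp add: bij_betw_inv_into_left)
  finally show ?thesis .
qed

(* The empty relation imposes no monotonicity: order_cone {} is the nonnegative orthant. *)
lemma conical_hull_eq_bij_rows_image:
  fixes \<phi> :: "'b::finite \<Rightarrow> real^'m::finite"
  assumes \<phi>: "bij_betw \<phi> UNIV S"
  shows "conical_hull S = (\<lambda>l. l v* (\<chi> j. \<phi> j)) ` order_cone {}"
proof (intro set_eqI iffI)
  fix x assume "x \<in> conical_hull S"
  then obtain c where c: "\<forall>v\<in>S. 0 \<le> c v" "x = (\<Sum>v\<in>S. c v *\<^sub>R v)"
    unfolding conical_hull_def by blast
  have "x = (\<chi> j. c (\<phi> j)) v* (\<chi> j. \<phi> j)"
    using \<phi> c(2) by (simp add: vector_matrix_mult_bij_rows[OF \<phi>] bij_betw_inv_into_right cong: sum.cong)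
  moreover have "(\<chi> j. c (\<phi> j)) \<in> order_cone {}"
    using c(1) \<phi> by (auto simp: order_cone_def bij_betw_def)
  ultimately show "x \<in> (\<lambda>l. l v* (\<chi> j. \<phi> j)) ` order_cone {}"
    by blast
next
  fix x assume "x \<in> (\<lambda>l. l v* (\<chi> j. \<phi> j)) ` order_cone {}"
  then show "x \<in> conical_hull S"
    unfolding conical_hull_def vector_matrix_mult_bij_rows[OF \<phi>] by (auto simp: order_cone_def)
qed

lemma inj_vector_matrix_mult_bij_rows:
  fixes \<phi> :: "'b::finite \<Rightarrow> real^'m::finite"
  assumes \<phi>: "bij_betw \<phi> UNIV S" and "independent S"
  shows "inj (\<lambda>l. l v* (\<chi> j. \<phi> j))"
proof (rule linear_inj_on_iff_eq_0[THEN iffD2, of _ UNIV, simplified])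
  show "linear (\<lambda>l. l v* (\<chi> j. \<phi> j))"
    by (rule linearI) (simp_all add: vector_matrix_left_distrib scaleR_vector_matrix_assoc)
  show "\<forall>l. l v* (\<chi> j. \<phi> j) = 0 \<longrightarrow> l = 0"
  proof (intro allI impI)
    fix l assume "l v* (\<chi> j. \<phi> j) = 0"
    moreover have "finite S"
      using bij_betw_finite[OF \<phi>] by simp
    ultimately have "l $ inv_into UNIV \<phi> v = 0" if "v \<in> S" for v
      using independentD[OF assms(2) _ order_refl _ that] by (simp add: vector_matrix_mult_bij_rows[OF \<phi>])
    then have "l $ j = 0" for j
      using \<phi> by (metis UNIV_I bij_betwE bij_betw_inv_into_left)
    then show "l = 0"
      by (simp add: vec_eq_iff)
  qed
qed

lemma simplicial_order_cone_coordinates: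
  fixes R :: "('b::finite \<times> 'b) set"
  assumes "simplicial (order_cone R)"
  obtains \<Phi> :: "real^'b^'b"
  where "order_cone R = (\<lambda>l. l v* \<Phi>) ` order_cone {}" and "inj (\<lambda>l. l v* \<Phi>)"
proof -
  obtain S where S: "independent S" "finite S" "card S = CARD('b)" and R: "order_cone R = conical_hull S"
    using assms unfolding simplicial_def by auto
  obtain \<phi> where \<phi>: "bij_betw \<phi> (UNIV :: 'b set) S"
    using finite_same_card_bij[OF finite_class.finite_UNIV S(2)] S(3) by auto
  show thesis
    using that[of "\<chi> j. \<phi> j"] R conical_hull_eq_bij_rows_image[OF \<phi>]
      inj_vector_matrix_mult_bij_rows[OF \<phi> S(1)]
    by simp
qed

section \<open>Matrices of bounded nonnegative rank\<close>

lemma outer_nth [simp]: "outer a b $ i $ j = a $ i * b $ j"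
  by (simp add: outer_def)

lemma column_outer: "column j (outer a b) = b $ j *\<^sub>R a"
  by (simp add: column_def vec_eq_iff)

lemma column_sum: "column j (\<Sum>i\<in>I. f i) = (\<Sum>i\<in>I. column j (f i))"
  by (induction I rule: infinite_finite_induct) (auto simp: column_def vec_eq_iff)

lemma ND_leI:
  "(\<And>i. i < k \<Longrightarrow> a i \<in> order_cone R1) \<Longrightarrow> (\<And>i. i < k \<Longrightarrow> b i \<in> order_cone R2)
    \<Longrightarrow> (\<Sum>i<k. outer (a i) (b i)) \<in> ND_le R1 R2 k"
  unfolding ND_le_def by blast

lemma ND_le_sumI:
  assumes "finite I" "card I \<le> k"
    and "\<And>i. i \<in> I \<Longrightarrow> x i \<in> order_cone R1" "\<And>i. i \<in> I \<Longrightarrow> y i \<in> order_cone R2"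
  shows "(\<Sum>i\<in>I. outer (x i) (y i)) \<in> ND_le R1 R2 k"
proof -
  obtain h where h: "bij_betw h {..<card I} I"
    using ex_bij_betw_nat_finite[OF assms(1)] by (auto simp: lessThan_atLeast0)
  then have h_mem: "h i \<in> I" if "i < card I" for i
    using that bij_betwE by blast
  define a where "a i = (if i < card I then x (h i) else 0)" for i
  define b where "b i = (if i < card I then y (h i) else 0)" for i
  have "(\<Sum>i\<in>I. outer (x i) (y i)) = (\<Sum>i<card I. outer (a i) (b i))"
    using sum.reindex_bij_betw[OF h, of "\<lambda>i. outer (x i) (y i)"] by (simp add: a_def b_def)
  also have "\<dots> = (\<Sum>i<k. outer (a i) (b i))"
    using assms(2) by (intro sum.mono_neutral_left) (auto simp: a_def vec_eq_iff)
  also have "\<dots> \<in> ND_le R1 R2 k"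
    using assms(3,4) h_mem
    by (intro ND_leI) (auto simp: a_def b_def convex_cone_contains_0[OF convex_cone_order_cone])
  finally show ?thesis .
qed

lemma ND_le_mono:
  assumes "k \<le> k'"
  shows "ND_le R1 R2 k \<subseteq> ND_le R1 R2 k'"
proof
  fix M assume "M \<in> ND_le R1 R2 k"
  then obtain a b where "\<And>i. i < k \<Longrightarrow> a i \<in> order_cone R1" "\<And>i. i < k \<Longrightarrow> b i \<in> order_cone R2"
    and "M = (\<Sum>i<k. outer (a i) (b i))"
    unfolding ND_le_def by blast
  with assms show "M \<in> ND_le R1 R2 k'"
    by (auto intro: ND_le_sumI)
qed

lemma column_ND_le:
  assumes "M \<in> ND_le R1 R2 k"
  shows "column j M \<in> order_cone R1"
proof -
  obtain a b where ab: "\<And>i. i < k \<Longrightarrow> a i \<in> order_cone R1" "\<And>i. i < k \<Longrightarrow> b i \<in> order_cone R2"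
    and M: "M = (\<Sum>i<k. outer (a i) (b i))"
    using assms unfolding ND_le_def by blast
  have "column j M = (\<Sum>i<k. b i $ j *\<^sub>R a i)"
    by (simp add: M column_sum column_outer)
  also have "\<dots> \<in> order_cone R1"
    using ab
    by (intro convex_cone_sum[OF convex_cone_order_cone] convex_cone_scaleR[OF convex_cone_order_cone])
       (auto intro: order_cone_nonneg)
  finally show ?thesis .
qed

lemma ND_le_orthant_of_columns:
  fixes N :: "real^'b::finite^'a::finite"
  assumes E: "finite E" "E \<subseteq> order_cone R" and cols: "\<And>j. column j N \<in> convex_cone hull E"
  shows "N \<in> ND_le R {} (card E)"
proof -
  have "\<exists>c. (\<forall>e\<in>E. 0 \<le> c e) \<and> column j N = (\<Sum>e\<in>E. c e *\<^sub>R e)" for j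
    using convex_cone_hull_finiteE[OF E(1) cols[of j]] by metis
  then obtain c where c: "\<And>j e. e \<in> E \<Longrightarrow> 0 \<le> c j e" "\<And>j. column j N = (\<Sum>e\<in>E. c j e *\<^sub>R e)"
    by metis
  have "N = (\<Sum>e\<in>E. outer e (\<chi> j. c j e))"
  proof -
    have "N $ i $ j = column j N $ i" for i j
      by (simp add: column_def)
    then show ?thesis
      by (simp add: vec_eq_iff c(2) mult.commute)
  qed
  also have "\<dots> \<in> ND_le R {} (card E)"
    using E c(1) by (intro ND_le_sumI) (auto simp: order_cone_def)
  finally show ?thesis .
qed

lemma ND_le_orthant_of_columns_min:
  fixes N :: "real^'b::finite^'a::finite"
  assumes E: "finite E" "E \<subseteq> order_cone R" and cols: "\<And>j. column j N \<in> convex_cone hull E"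
  shows "N \<in> ND_le R {} (min (card E) CARD('b))"
proof -
  let ?C = "range (\<lambda>j. column j N)"
  have "?C \<subseteq> order_cone R"
    using cols hull_minimal[of E "order_cone R" convex_cone] E(2) convex_cone_order_cone by blast
  then have "N \<in> ND_le R {} (card ?C)"
    by (intro ND_le_orthant_of_columns) (auto intro: hull_inc)
  moreover have "card ?C \<le> CARD('b)"
    by (rule card_image_le) simp
  ultimately have "N \<in> ND_le R {} CARD('b)"
    using ND_le_mono by blast
  moreover have "N \<in> ND_le R {} (card E)"
    using E cols by (rule ND_le_orthant_of_columns)
  ultimately show ?thesis
    by (simp add: min_def)
qed

(* Each column is a nonnegative combination of the left factors; extremality forces one of them
   onto the ray of the column. *)
lemma card_le_ND_rank_of_extremal_columns:
  fixes M :: "real^'b::finite^'a::finite"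
  assumes M: "M \<in> ND_le R1 R2 k"
    and extremal: "\<And>j. j \<in> J \<Longrightarrow> column j M \<noteq> 0 \<and> ray (column j M) face_of order_cone R1"
    and inj: "inj_on (\<lambda>j. ray (column j M)) J"
  shows "card J \<le> k"
proof -
  obtain a b where a: "\<And>i. i < k \<Longrightarrow> a i \<in> order_cone R1" and b: "\<And>i. i < k \<Longrightarrow> b i \<in> order_cone R2"
    and M_eq: "M = (\<Sum>i<k. outer (a i) (b i))"
    using M unfolding ND_le_def by blast
  have "\<exists>i<k. ray (a i) = ray (column j M)" if j: "j \<in> J" for j
  proof -
    have col: "column j M = (\<Sum>i<k. b i $ j *\<^sub>R a i)"
      by (simp add: M_eq column_sum column_outer)
    have terms: "b i $ j *\<^sub>R a i \<in> order_cone R1" if "i \<in> {..<k}" for i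
      using a b that by (intro convex_cone_scaleR[OF convex_cone_order_cone] order_cone_nonneg) auto
    have face: "ray (column j M) face_of order_cone R1" and "column j M \<noteq> 0"
      using extremal[OF j] by auto
    then obtain i where i: "i \<in> {..<k}" "b i $ j *\<^sub>R a i \<noteq> 0" "ray (b i $ j *\<^sub>R a i) = ray (column j M)"
      using ray_face_of_sum_summand[OF face convex_cone_order_cone finite_lessThan terms col] by blast
    then have "i < k"
      by simp
    moreover have "ray (a i) = ray (column j M)"
      using ray_scaleR_eq[OF order_cone_nonneg[OF b[OF \<open>i < k\<close>]] i(2)] i(3) by simp
    ultimately show ?thesis
      by blast
  qed
  then obtain \<kappa> where \<kappa>: "\<And>j. j \<in> J \<Longrightarrow> \<kappa> j < k \<and> ray (a (\<kappa> j)) = ray (column j M)"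
    by metis
  have "inj_on \<kappa> J"
    using inj \<kappa> unfolding inj_on_def by metis
  then have "card J \<le> card {..<k}"
    using \<kappa> by (intro card_inj_on_le) auto
  then show ?thesis
    by simp
qed

lemma card_le_ND_rank_of_generator_columns:
  fixes M :: "real^'b::finite^'a::finite"
  assumes G: "finite G" "conic_independent G" "convex_cone hull G = order_cone R1"
    and M: "M \<in> ND_le R1 R2 k"
    and cols: "\<And>j. j \<in> J \<Longrightarrow> column j M \<in> G" and inj: "inj_on (\<lambda>j. column j M) J"
  shows "card J \<le> k"
proof -
  have pointed: "pointed (convex_cone hull G)"
    using G(3) pointed_order_cone by simp
  show ?thesis
  proof (rule card_le_ND_rank_of_extremal_columns[OF M])
    show "column j M \<noteq> 0 \<and> ray (column j M) face_of order_cone R1" if "j \<in> J" for j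
      using cols[OF that] conic_independent_nonzero[OF G(1,2) pointed]
        ray_face_of_convex_cone_hull[OF G(1,2) pointed] G(3)
      by simp
    show "inj_on (\<lambda>j. ray (column j M)) J"
    proof (rule inj_onI)
      fix j j' assume j: "j \<in> J" "j' \<in> J" and "ray (column j M) = ray (column j' M)"
      then have "column j M = column j' M"
        using inj_on_ray[OF G(1,2) pointed] cols by (simp add: inj_on_eq_iff)
      then show "j = j'"
        using inj j unfolding inj_on_def by blast
    qed
  qed
qed

lemma rank_le_of_ND_le:
  assumes "M \<in> ND_le R1 R2 k"
  shows "rank M \<le> k"
proof -
  obtain a b where M: "M = (\<Sum>i<k. outer (a i) (b i))"
    using assms unfolding ND_le_def by blast
  have "column j M \<in> span (a ` {..<k})" for j
    unfolding M column_sum column_outer by (intro span_sum span_scale span_base) simp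
  then have "columns M \<subseteq> span (a ` {..<k})"
    by (auto simp: columns_def)
  then have "rank M \<le> card (a ` {..<k})"
    unfolding column_rank_def by (simp add: dim_le_card)
  also have "\<dots> \<le> k"
    using card_image_le[of "{..<k}" a] by simp
  finally show ?thesis .
qed

lemma outer_mult_vector: "outer u x *v y = (x \<bullet> y) *\<^sub>R u"
  by (simp add: vec_eq_iff matrix_vector_mult_def inner_vec_def sum_distrib_left mult_ac)

lemma rank_increasing_perturbation:
  fixes A :: "real^'n::finite^'m::finite"
  assumes "rank A < CARD('n)" and "rank A < CARD('m)" and "0 < e"
  obtains A' where "dist A' A < e" and "rank A < rank A'"
proof -
  obtain x where x: "x \<noteq> 0" "A *v x = 0"
    using assms(1) matrix_nonfull_linear_equations_eq[of A] by auto
  have "\<not> surj ((*v) A)"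
    using assms(2) full_rank_surjective[of A] by simp
  then obtain u where u: "u \<notin> range ((*v) A)"
    by blast
  have "u \<noteq> 0"
    using u matrix_vector_mult_0_right[of A] by (metis rangeI)
  then have "outer u x \<noteq> 0"
    using x(1) by (auto simp: vec_eq_iff)
  \<comment> \<open>Adding a multiple of outer u x with A x = 0 keeps the range of A and adds u to it.\<close>
  define t where "t = e / (2 * norm (outer u x))"
  have "0 < t"
    using \<open>outer u x \<noteq> 0\<close> assms(3) by (simp add: t_def)
  define A' where "A' = A + t *\<^sub>R outer u x"
  have A'_mult: "A' *v y = A *v y + (t * (x \<bullet> y)) *\<^sub>R u" for y
    by (simp add: A'_def matrix_vector_mult_add_rdistrib outer_mult_vector
        flip: scaleR_matrix_vector_assoc)
  have "dist A' A = e / 2"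
    using \<open>outer u x \<noteq> 0\<close> \<open>0 < t\<close> assms(3) by (simp add: A'_def dist_norm t_def)
  moreover have "rank A < rank A'"
  proof -
    have "A *v y = A' *v (y - ((x \<bullet> y) / (x \<bullet> x)) *\<^sub>R x)" for y
      using x by (simp add: A'_mult matrix_vector_mult_diff_distrib matrix_vector_mult_scaleR inner_diff_right)
    then have "range ((*v) A) \<subseteq> range ((*v) A')"
      by auto
    moreover have "u = A' *v ((1 / (t * (x \<bullet> x))) *\<^sub>R x)"
      using x \<open>0 < t\<close> by (simp add: A'_mult matrix_vector_mult_scaleR)
    ultimately have "insert u (range ((*v) A)) \<subseteq> range ((*v) A')"
      by auto
    then have "dim (insert u (range ((*v) A))) \<le> rank A'"
      unfolding rank_dim_range by (rule dim_subset)
    moreover have "span (range ((*v) A)) = range ((*v) A)"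
      by (simp add: linear_subspace_image)
    ultimately show ?thesis
      using u unfolding rank_dim_range dim_insert by auto
  qed
  ultimately show thesis
    using that[of A'] assms(3) by simp
qed

lemma interior_rank_le_empty:
  assumes "r < min CARD('n::finite) CARD('m::finite)"
  shows "interior {A :: real^'n^'m. rank A \<le> r} = {}"
proof (rule ccontr)
  assume "interior {A :: real^'n^'m. rank A \<le> r} \<noteq> {}"
  then obtain A0 e where "0 < e" and ball: "ball A0 e \<subseteq> {A :: real^'n^'m. rank A \<le> r}"
    by (metis all_not_in_conv mem_interior)
  then obtain A where A: "A \<in> ball A0 e" and max: "\<And>B. B \<in> ball A0 e \<Longrightarrow> rank B \<le> rank A"
    using Lattices_Big.ex_has_greatest_nat[of "\<lambda>A. A \<in> ball A0 e" A0 rank "Suc r"] by force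
  have "rank A < CARD('n)" "rank A < CARD('m)"
    using A ball assms by auto
  moreover have "0 < e - dist A0 A"
    using A by simp
  ultimately obtain A' where "dist A' A < e - dist A0 A" "rank A < rank A'"
    using rank_increasing_perturbation by blast
  moreover have "A' \<in> ball A0 e"
    using calculation(1) dist_triangle[of A0 A' A] by (simp add: dist_commute)
  ultimately show False
    using max by (meson leD)
qed

lemma compact_sums_lessThan:
  fixes T :: "'v::real_normed_vector set" and k :: nat
  assumes "compact T"
  shows "compact {\<Sum>i<k. t i | t. \<forall>i<k. t i \<in> T}"
proof (induction k)
  case 0
  then show ?case
    by simp
next
  case (Suc k)
  have "{\<Sum>i<Suc k. t i | t. \<forall>i<Suc k. t i \<in> T}
      = {x + y | x y. x \<in> {\<Sum>i<k. t i | t. \<forall>i<k. t i \<in> T} \<and> y \<in> T}"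
  proof (intro set_eqI iffI)
    fix z assume "z \<in> {\<Sum>i<Suc k. t i | t. \<forall>i<Suc k. t i \<in> T}"
    then obtain t where "\<forall>i<Suc k. t i \<in> T" "z = (\<Sum>i<k. t i) + t k"
      by auto
    then show "z \<in> {x + y | x y. x \<in> {\<Sum>i<k. t i | t. \<forall>i<k. t i \<in> T} \<and> y \<in> T}"
      by fastforce
  next
    fix z assume "z \<in> {x + y | x y. x \<in> {\<Sum>i<k. t i | t. \<forall>i<k. t i \<in> T} \<and> y \<in> T}"
    then obtain t y where t: "\<forall>i<k. t i \<in> T" "y \<in> T" "z = (\<Sum>i<k. t i) + y"
      by auto
    then have "z = (\<Sum>i<Suc k. (t(k := y)) i)" "\<forall>i<Suc k. (t(k := y)) i \<in> T"
      by (auto simp: less_Suc_eq)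
    then show "z \<in> {\<Sum>i<Suc k. t i | t. \<forall>i<Suc k. t i \<in> T}"
      by blast
  qed
  then show ?case
    using compact_sums[OF Suc.IH assms] by simp
qed

definition normalized_outers :: "('a::finite \<times> 'a) set \<Rightarrow> ('b::finite \<times> 'b) set \<Rightarrow> real \<Rightarrow> (real^'b^'a) set"
  where "normalized_outers R1 R2 B = (\<lambda>(a, b). outer a b) `
    ((order_cone R1 \<inter> cbox 0 1) \<times> (order_cone R2 \<inter> cbox 0 (\<chi> _. B)))"

lemma compact_normalized_outers: "compact (normalized_outers R1 R2 B)"
  unfolding normalized_outers_def outer_def
  by (intro compact_continuous_image compact_Times closed_Int_compact closed_order_cone compact_cbox)
     (simp add: case_prod_beta; intro continuous_intros)

lemma outer_in_normalized_outers:
  assumes a: "a \<in> order_cone R1" and b: "b \<in> order_cone R2"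
    and bound: "\<And>x y. a $ x * b $ y \<le> B" and "0 \<le> B"
  shows "outer a b \<in> normalized_outers R1 R2 B"
proof (cases "a = 0")
  case True
  show ?thesis
    unfolding normalized_outers_def
  proof (rule image_eqI[of _ _ "(0, 0)"])
    show "outer a b = (\<lambda>(a, b). outer a b) (0, 0)"
      using True by (simp add: vec_eq_iff)
    show "(0, 0) \<in> (order_cone R1 \<inter> cbox 0 1) \<times> (order_cone R2 \<inter> cbox 0 (\<chi> _. B))"
      using \<open>0 \<le> B\<close> by (simp add: mem_box_cart convex_cone_contains_0[OF convex_cone_order_cone])
  qed
next
  case False
  define \<alpha> where "\<alpha> = Max (range (\<lambda>x. a $ x))"
  have a_le: "a $ x \<le> \<alpha>" for x
    unfolding \<alpha>_def by simp
  have "\<alpha> \<in> range (\<lambda>x. a $ x)"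
    unfolding \<alpha>_def by (rule Max_in) auto
  then obtain x0 where x0: "\<alpha> = a $ x0"
    by blast
  obtain x1 where "a $ x1 \<noteq> 0"
    using False by (auto simp: vec_eq_iff)
  then have "0 < \<alpha>"
    using a_le[of x1] order_cone_nonneg[OF a, of x1] by linarith
  show ?thesis
    unfolding normalized_outers_def
  proof (rule image_eqI[of _ _ "((1 / \<alpha>) *\<^sub>R a, \<alpha> *\<^sub>R b)"])
    show "outer a b = (\<lambda>(a, b). outer a b) ((1 / \<alpha>) *\<^sub>R a, \<alpha> *\<^sub>R b)"
      using \<open>0 < \<alpha>\<close> by (simp add: vec_eq_iff)
    have "(1 / \<alpha>) *\<^sub>R a \<in> order_cone R1 \<inter> cbox 0 1"
      using \<open>0 < \<alpha>\<close> a a_le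
      by (auto simp: mem_box_cart order_cone_nonneg intro: convex_cone_scaleR[OF convex_cone_order_cone])
    moreover have "\<alpha> *\<^sub>R b \<in> order_cone R2 \<inter> cbox 0 (\<chi> _. B)"
      using \<open>0 < \<alpha>\<close> b bound[of x0] x0
      by (auto simp: mem_box_cart order_cone_nonneg intro: convex_cone_scaleR[OF convex_cone_order_cone])
    ultimately show "((1 / \<alpha>) *\<^sub>R a, \<alpha> *\<^sub>R b) \<in>
        (order_cone R1 \<inter> cbox 0 1) \<times> (order_cone R2 \<inter> cbox 0 (\<chi> _. B))"
      by simp
  qed
qed

lemma sums_normalized_outers_subset_ND_le:
  "{\<Sum>i<k. t i | t. \<forall>i<k. t i \<in> normalized_outers R1 R2 B} \<subseteq> ND_le R1 R2 k"
proof
  fix z assume "z \<in> {\<Sum>i<k. t i | t. \<forall>i<k. t i \<in> normalized_outers R1 R2 B}"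
  then obtain t where t: "\<forall>i<k. t i \<in> normalized_outers R1 R2 B" "z = (\<Sum>i<k. t i)"
    by blast
  then have "\<forall>i<k. \<exists>a b. t i = outer a b \<and> a \<in> order_cone R1 \<and> b \<in> order_cone R2"
    unfolding normalized_outers_def by fastforce
  then obtain a b
    where "\<And>i. i < k \<Longrightarrow> t i = outer (a i) (b i) \<and> a i \<in> order_cone R1 \<and> b i \<in> order_cone R2"
    by metis
  then show "z \<in> ND_le R1 R2 k"
    using t(2) ND_leI[of k a R1 b R2] by simp
qed

lemma ND_le_in_sums_normalized_outers:
  assumes "M \<in> ND_le R1 R2 k" and M_le: "\<And>x y. M $ x $ y \<le> B" and "0 \<le> B"
  shows "M \<in> {\<Sum>i<k. t i | t. \<forall>i<k. t i \<in> normalized_outers R1 R2 B}"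
proof -
  obtain a b where a: "\<And>i. i < k \<Longrightarrow> a i \<in> order_cone R1" and b: "\<And>i. i < k \<Longrightarrow> b i \<in> order_cone R2"
    and M: "M = (\<Sum>i<k. outer (a i) (b i))"
    using assms(1) unfolding ND_le_def by blast
  have "a i $ x * b i $ y \<le> M $ x $ y" if "i < k" for i x y
    unfolding M sum_component outer_nth using that
    by (intro member_le_sum) (auto intro!: mult_nonneg_nonneg order_cone_nonneg a b)
  then have bound: "a i $ x * b i $ y \<le> B" if "i < k" for i x y
    using that M_le[of x y] by (meson order_trans)
  have "outer (a i) (b i) \<in> normalized_outers R1 R2 B" if "i < k" for i
    using outer_in_normalized_outers[OF a[OF that] b[OF that] bound[OF that] \<open>0 \<le> B\<close>] .
  then show ?thesis
    unfolding M by blast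
qed

lemma closed_ND_le: "closed (ND_le R1 R2 k)"
proof -
  have "M \<in> ND_le R1 R2 k" if M: "M \<in> closure (ND_le R1 R2 k)" for M
  proof -
    \<comment> \<open>Near M all entries are at most B, so every decomposition normalises into the compact set K.\<close>
    define B where "B = norm M + 1"
    define K where "K = {\<Sum>i<k. t i | t. \<forall>i<k. t i \<in> normalized_outers R1 R2 B}"
    have "closed K"
      unfolding K_def by (intro compact_imp_closed compact_sums_lessThan compact_normalized_outers)
    have "ball M 1 \<inter> ND_le R1 R2 k \<subseteq> K"
    proof
      fix N assume N: "N \<in> ball M 1 \<inter> ND_le R1 R2 k"
      have "N $ x $ y \<le> B" for x y
      proof -
        have "N $ x $ y \<le> norm N"
          using component_le_norm_cart[of "N $ x" y] Finite_Cartesian_Product.norm_nth_le[of N x]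
            abs_ge_self[of "N $ x $ y"]
          by linarith
        also have "\<dots> \<le> norm M + norm (N - M)"
          by (rule norm_triangle_sub)
        finally show ?thesis
          using N by (simp add: B_def dist_norm norm_minus_commute)
      qed
      then show "N \<in> K"
        unfolding K_def using N by (intro ND_le_in_sums_normalized_outers) (auto simp: B_def)
    qed
    then have "closure (ball M 1 \<inter> ND_le R1 R2 k) \<subseteq> K"
      using \<open>closed K\<close> closure_minimal by blast
    moreover have "M \<in> closure (ball M 1 \<inter> ND_le R1 R2 k)"
      using open_Int_closure_subset[of "ball M 1" "ND_le R1 R2 k"] M by auto
    ultimately show ?thesis
      using sums_normalized_outers_subset_ND_le unfolding K_def by blast
  qed
  then show ?thesis
    using closure_subset_eq by blast
qed

lemma outer_vector_matrix_mult: "outer a (l v* \<Phi>) = outer a l ** \<Phi>"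
  by (simp add: vec_eq_iff matrix_matrix_mult_def vector_matrix_mult_def sum_distrib_left mult_ac)

lemma linear_matrix_mult_right: "linear (\<lambda>N :: real^'n^'m. N ** \<Phi>)"
  by (rule linearI) (simp_all add: vec_eq_iff matrix_matrix_mult_def sum.distrib sum_distrib_left
      algebra_simps)

lemma ND_le_change_of_coordinates:
  assumes cone: "order_cone R2 = (\<lambda>l. l v* \<Phi>) ` order_cone R2'"
  shows "ND_le R1 R2 k = (\<lambda>N. N ** \<Phi>) ` ND_le R1 R2' k"
proof (intro set_eqI iffI)
  fix M assume "M \<in> ND_le R1 R2 k"
  then obtain a b where a: "\<And>i. i < k \<Longrightarrow> a i \<in> order_cone R1" and b: "\<And>i. i < k \<Longrightarrow> b i \<in> order_cone R2"
    and M: "M = (\<Sum>i<k. outer (a i) (b i))"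
    unfolding ND_le_def by blast
  have "\<exists>l. l \<in> order_cone R2' \<and> b i = l v* \<Phi>" if "i < k" for i
    using b[OF that] unfolding cone by blast
  then obtain l where l: "\<And>i. i < k \<Longrightarrow> l i \<in> order_cone R2' \<and> b i = l i v* \<Phi>"
    by metis
  have "M = (\<Sum>i<k. outer (a i) (l i)) ** \<Phi>"
    by (simp add: M l outer_vector_matrix_mult linear_sum[OF linear_matrix_mult_right])
  moreover have "(\<Sum>i<k. outer (a i) (l i)) \<in> ND_le R1 R2' k"
    using a l by (intro ND_leI) auto
  ultimately show "M \<in> (\<lambda>N. N ** \<Phi>) ` ND_le R1 R2' k"
    by blast
next
  fix M assume "M \<in> (\<lambda>N. N ** \<Phi>) ` ND_le R1 R2' k"
  then obtain N where "N \<in> ND_le R1 R2' k" and M: "M = N ** \<Phi>"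
    by blast
  then obtain a l where a: "\<And>i. i < k \<Longrightarrow> a i \<in> order_cone R1" and l: "\<And>i. i < k \<Longrightarrow> l i \<in> order_cone R2'"
    and N: "N = (\<Sum>i<k. outer (a i) (l i))"
    unfolding ND_le_def by blast
  have "M = (\<Sum>i<k. outer (a i) (l i v* \<Phi>))"
    by (simp add: M N outer_vector_matrix_mult linear_sum[OF linear_matrix_mult_right])
  also have "\<dots> \<in> ND_le R1 R2 k"
    using a l by (intro ND_leI) (auto simp: cone)
  finally show "M \<in> ND_le R1 R2 k" .
qed

section \<open>Typical nonnegative ranks\<close>

lemma ND_eq_subset_ND_le: "ND_eq R1 R2 r \<subseteq> ND_le R1 R2 r"
  by (auto simp: ND_eq_def)

lemma typical_ND_rank_ge:
  fixes R1 :: "('a::finite \<times> 'a) set" and R2 :: "('b::finite \<times> 'b) set"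
  assumes "typical_ND_rank R1 R2 r"
  shows "min CARD('a) CARD('b) \<le> r"
proof (rule ccontr)
  assume "\<not> min CARD('a) CARD('b) \<le> r"
  then have "interior {M :: real^'b^'a. rank M \<le> r} = {}"
    by (intro interior_rank_le_empty) (simp add: min_def split: if_splits)
  moreover have "ND_eq R1 R2 r \<subseteq> {M. rank M \<le> r}"
    using ND_eq_subset_ND_le rank_le_of_ND_le by blast
  ultimately show False
    using assms interior_mono unfolding typical_ND_rank_def by blast
qed

lemma typical_ND_rank_le:
  assumes "\<And>k. ND_le R1 R2 k \<subseteq> ND_le R1 R2 m" and "typical_ND_rank R1 R2 r"
  shows "r \<le> m"
proof (rule ccontr)
  assume "\<not> r \<le> m"
  then have "m \<le> r - 1"
    by simp
  then have "ND_le R1 R2 r \<subseteq> ND_le R1 R2 (r - 1)"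
    using assms(1)[of r] ND_le_mono[of m "r - 1" R1 R2] by blast
  then have "ND_eq R1 R2 r = {}"
    using \<open>\<not> r \<le> m\<close> by (auto simp: ND_eq_def)
  then show False
    using assms(2) by (simp add: typical_ND_rank_def)
qed

lemma typical_ND_rank_change_of_coordinates:
  fixes \<Phi> :: "real^'b::finite^'b"
  assumes cone: "order_cone R2 = (\<lambda>l. l v* \<Phi>) ` order_cone R2'" and inj: "inj (\<lambda>l. l v* \<Phi>)"
  shows "typical_ND_rank R1 R2 r \<longleftrightarrow> typical_ND_rank R1 R2' r"
proof -
  let ?f = "\<lambda>N :: real^'b^'a::finite. N ** \<Phi>"
  have "?f N $ i = N $ i v* \<Phi>" for N i
    by (simp add: vec_eq_iff matrix_matrix_mult_def vector_matrix_mult_def mult.commute)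
  then have "inj ?f"
    using inj by (auto simp: inj_def vec_eq_iff[of "_ :: real^'b^'a"])
  then have "ND_eq R1 R2 r = ?f ` ND_eq R1 R2' r"
    by (simp add: ND_eq_def ND_le_change_of_coordinates[OF cone] image_set_diff)
  then show ?thesis
    unfolding typical_ND_rank_def
    by (simp add: interior_injective_linear_image[OF linear_matrix_mult_right \<open>inj ?f\<close>])
qed

lemma open_columns_in:
  assumes "open U"
  shows "open {N :: real^'b::finite^'a::finite. \<forall>j. column j N \<in> U}"
proof -
  have "continuous_on UNIV (\<lambda>N :: real^'b^'a. column j N)" for j
    unfolding column_def by (intro continuous_on_vec_lambda continuous_on_component continuous_on_id)
  then have "open ((\<lambda>N :: real^'b^'a. column j N) -` U)" for j
    using continuous_on_open_vimage[OF open_UNIV] assms by auto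
  moreover have "{N :: real^'b^'a. \<forall>j. column j N \<in> U} = (\<Inter>j. (\<lambda>N. column j N) -` U)"
    by auto
  ultimately show ?thesis
    by (simp add: open_INT)
qed

lemma closure_columns_interior:
  fixes N :: "real^'b::finite^'a::finite"
  assumes "convex K" and "w \<in> interior K" and "\<And>j. column j N \<in> K"
  shows "N \<in> closure {N. \<forall>j. column j N \<in> interior K}"
proof -
  define W :: "real^'b^'a" where "W = (\<chi> i j. w $ i)"
  have "((\<lambda>e. N - e *\<^sub>R (N - W)) \<longlongrightarrow> N - 0 *\<^sub>R (N - W)) (at_right 0)"
    by (intro tendsto_intros)
  moreover have "\<forall>\<^sub>F e in at_right 0. N - e *\<^sub>R (N - W) \<in> {N. \<forall>j. column j N \<in> interior K}"
    unfolding eventually_at_right_field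
  proof (intro exI[of _ 1] conjI allI impI CollectI)
    fix e :: real and j assume "0 < e" "e < 1"
    have "column j (N - e *\<^sub>R (N - W)) = column j N - e *\<^sub>R (column j N - w)"
      by (simp add: column_def W_def vec_eq_iff)
    also have "\<dots> \<in> interior K"
      using assms \<open>0 < e\<close> \<open>e < 1\<close> closure_subset
      by (intro mem_interior_closure_convex_shrink) auto
    finally show "column j (N - e *\<^sub>R (N - W)) \<in> interior K" .
  qed simp
  ultimately show ?thesis
    by (intro Lim_in_closed_set[OF closed_closure _ trivial_limit_at_right_real])
       (auto elim: eventually_mono intro: closure_subset[THEN subsetD])
qed

lemma typical_ND_rank_if_closure:
  assumes "open V" and "V \<subseteq> ND_le R1 R2 r" and "N \<in> closure V" and "N \<notin> ND_le R1 R2 (r - 1)"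
    and "0 < r"
  shows "typical_ND_rank R1 R2 r"
proof -
  have "open (- ND_le R1 R2 (r - 1))"
    using closed_ND_le by blast
  then have "- ND_le R1 R2 (r - 1) \<inter> V \<noteq> {}"
    using assms(3,4) open_Int_closure_eq_empty by blast
  moreover have "- ND_le R1 R2 (r - 1) \<inter> V \<subseteq> ND_eq R1 R2 r"
    using assms(2,5) by (auto simp: ND_eq_def)
  moreover have "open (- ND_le R1 R2 (r - 1) \<inter> V)"
    using \<open>open (- ND_le R1 R2 (r - 1))\<close> assms(1) by blast
  ultimately show ?thesis
    unfolding typical_ND_rank_def by (metis interior_maximal subset_empty)
qed

lemma typical_ND_rank_orthantI:
  fixes R :: "('a::finite \<times> 'a) set" and G :: "(real^'a) set"
  assumes po: "partial_order_on UNIV R"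
    and G: "finite G" "conic_independent G" "convex_cone hull G = order_cone R"
    and r: "min CARD('a) CARD('b::finite) \<le> r" "r \<le> min (card G) CARD('b)"
  shows "typical_ND_rank R ({} :: ('b \<times> 'b) set) r"
proof -
  have "0 < min CARD('a) CARD('b)"
    by simp
  then have "0 < r"
    using r(1) by linarith
  \<comment> \<open>With card E = max r CARD('a), min (card E) CARD('b) \<le> r holds whether r \<ge> CARD('a)
    or r = CARD('b).\<close>
  obtain E where E: "E \<subseteq> G" "card E = max r CARD('a)" "interior (convex_cone hull E) \<noteq> {}"
    using generators_subset_with_interior[OF po G(1,3), of "max r CARD('a)"]
      CARD_le_card_generators_order_cone[OF po G(1,3)] r(2)
    by auto
  have "finite E"
    using E(1) G(1) finite_subset by blast
  obtain w where w: "w \<in> interior (convex_cone hull E)"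
    using E(3) by blast
  obtain J :: "'b set" where J: "card J = r"
    using obtain_subset_with_card_n[of r "UNIV :: 'b set"] r(2) by auto
  obtain e where e: "inj_on e J" "e ` J \<subseteq> E"
    using card_le_inj[of J E] J E(2) \<open>finite E\<close> by fastforce
  define N :: "real^'b^'a" where "N = (\<chi> i j. if j \<in> J then e j $ i else 0)"
  have col_N: "column j N = (if j \<in> J then e j else 0)" for j
    by (simp add: N_def column_def vec_eq_iff)
  have N_notin: "N \<notin> ND_le R {} (r - 1)"
  proof
    assume "N \<in> ND_le R {} (r - 1)"
    moreover have "column j N \<in> G" if "j \<in> J" for j
      using that e(2) E(1) by (auto simp: col_N)
    moreover have "inj_on (\<lambda>j. column j N) J"
      using e(1) by (auto simp: col_N inj_on_def)
    ultimately have "card J \<le> r - 1"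
      by (rule card_le_ND_rank_of_generator_columns[OF G])
    with J \<open>0 < r\<close> show False
      by simp
  qed
  have "E \<subseteq> order_cone R"
    using E(1) hull_subset[of G convex_cone] G(3) by simp
  let ?V = "{M :: real^'b^'a. \<forall>j. column j M \<in> interior (convex_cone hull E)}"
  have V_ND: "?V \<subseteq> ND_le R {} r"
  proof
    fix M assume "M \<in> ?V"
    then have "M \<in> ND_le R {} (min (card E) CARD('b))"
      using interior_subset
      by (intro ND_le_orthant_of_columns_min[OF \<open>finite E\<close> \<open>E \<subseteq> order_cone R\<close>]) blast
    moreover have "min (card E) CARD('b) \<le> r"
      using E(2) r(1) by (auto simp: min_def max_def)
    ultimately show "M \<in> ND_le R {} r"
      using ND_le_mono by blast
  qed
  have "N \<in> closure ?V"
    using col_N e(2) E(1)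
    by (intro closure_columns_interior[OF convex_convex_cone_hull w])
       (auto intro: hull_inc convex_cone_hull_contains_0)
  then show ?thesis
    using typical_ND_rank_if_closure[OF open_columns_in[OF open_interior] V_ND] N_notin \<open>0 < r\<close>
    by blast
qed

theorem typical_ND_rank_orthant_iff:
  fixes R :: "('a::finite \<times> 'a) set" and G :: "(real^'a) set"
  assumes po: "partial_order_on UNIV R"
    and G: "finite G" "conic_independent G" "convex_cone hull G = order_cone R"
  shows "typical_ND_rank R ({} :: ('b::finite \<times> 'b) set) r \<longleftrightarrow>
           min CARD('a) CARD('b) \<le> r \<and> r \<le> min (card G) CARD('b)"
proof
  assume typical: "typical_ND_rank R ({} :: ('b \<times> 'b) set) r"
  have "G \<subseteq> order_cone R"
    using hull_subset[of G convex_cone] G(3) by simp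
  have bound: "ND_le R ({} :: ('b \<times> 'b) set) k \<subseteq> ND_le R {} (min (card G) CARD('b))" for k
  proof
    fix N assume "N \<in> ND_le R ({} :: ('b \<times> 'b) set) k"
    then have "column j N \<in> convex_cone hull G" for j
      using column_ND_le G(3) by simp
    then show "N \<in> ND_le R {} (min (card G) CARD('b))"
      by (rule ND_le_orthant_of_columns_min[OF G(1) \<open>G \<subseteq> order_cone R\<close>])
  qed
  show "min CARD('a) CARD('b) \<le> r \<and> r \<le> min (card G) CARD('b)"
    using typical_ND_rank_ge[OF typical] typical_ND_rank_le[OF bound typical] by simp
next
  assume "min CARD('a) CARD('b) \<le> r \<and> r \<le> min (card G) CARD('b)"
  then show "typical_ND_rank R ({} :: ('b \<times> 'b) set) r"
    using typical_ND_rank_orthantI[OF po G] by blast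
qed

theorem corollary1:
  fixes R1 :: "('a::finite \<times> 'a) set" and R2 :: "('b::finite \<times> 'b) set"
    and r q1 q2 :: nat
  assumes "partial_order_on UNIV R1" and "partial_order_on UNIV R2"
    and "q1 = card (extremal_rays (order_cone R1))"
    and "q2 = card (extremal_rays (order_cone R2))"
    and "simplicial (order_cone R2)"
  shows "typical_ND_rank R1 R2 r \<longleftrightarrow>
           min CARD('a) CARD('b) \<le> r \<and> r \<le> min q1 q2"
proof -
  obtain G :: "(real^'a) set"
    where G: "finite G" "conic_independent G" "convex_cone hull G = order_cone R1"
    by (rule order_cone_conic_independent_generators)
  have "pointed (convex_cone hull G)"
    using G(3) pointed_order_cone by simp
  then have "q1 = card G"
    using assms(3) G(3) card_extremal_rays_convex_cone_hull[OF G(1,2)] by simp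
  moreover have "q2 = CARD('b)"
    using assms(4,5) card_extremal_rays_simplicial_order_cone by simp
  moreover obtain \<Phi> :: "real^'b^'b"
    where "order_cone R2 = (\<lambda>l. l v* \<Phi>) ` order_cone {}" and "inj (\<lambda>l. l v* \<Phi>)"
    using assms(5) by (rule simplicial_order_cone_coordinates)
  then have "typical_ND_rank R1 R2 r \<longleftrightarrow> typical_ND_rank R1 ({} :: ('b \<times> 'b) set) r"
    by (rule typical_ND_rank_change_of_coordinates)
  ultimately show ?thesis
    using typical_ND_rank_orthant_iff[OF assms(1) G] by simp
qed

end
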